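(* There is an absolute constant $C>0$ such that for every instance with capacities $c_i\ge1$ and $c_{\min}=\min_{i\in I}c_i\ge2$, $$\mathrm{OPT}(\mathrm{LP})\Big(1-C\sqrt{\tfrac{\log c_{\min}}{c_{\min}}}\Big)\ \le\ \mathrm{OPT}(\mathrm{PBP})\ \le\ \mathrm{OPT}(\mathrm{LP}).$$ In particular $\mathrm{OPT}(\mathrm{PBP})/\mathrm{OPT}(\mathrm{LP})\to1$ as $c_{\min}\to\infty$.
   Context: Instance: bipartite graph $G=(I,T,E)$, rewards $r_i>0$ and integer capacities $c_i\ge1$ for $i\in I$, arrivals $t\in T$ ordered $1,2,\dots$, edge probabilities $p_{it}\in[0,1]$. Expectation LP: maximize $\sum_{(i,t)\in E}p_{it}r_ix_{it}$ subject to $\sum_tp_{it}x_{it}\le c_i$ for all $i$, $\sum_ix_{it}\le1$ for all $t$, $0\le x_{it}\le1$; its optimum is $\mathrm{OPT}(\mathrm{LP})$. Sample paths: $\omega$ assigns each edge an outcome $\mathbb{1}^\omega(i,t)\in\{0,1\}$, independent Bernoulli($p_{it}$); $\Omega$ is the set of all paths; $\omega_{t}$ is the restriction of $\omega$ to edges incident to arrivals $t'\le t$. PBP: variables $x^\omega_{it}\in[0,1]$; maximize $E_\omega\big[\sum_{(i,t)\in E}r_ix^\omega_{it}\mathbb{1}^\omega(i,t)\big]$ subject to $\sum_tx^\omega_{it}\mathbb{1}^\omega(i,t)\le c_i$ for all $i,\omega$; $\sum_ix^\omega_{it}\le1$ for all $t,\omega$; $x^\omega_{it}=x^{\omega'}_{it}$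 whenever $\omega_{t-1}=\omega'_{t-1}$. Its optimum is $\mathrm{OPT}(\mathrm{PBP})$. *)

theory Defs
  imports "HOL-Probability.Probability"
begin

text \<open>Instance: offline nodes I (a finite set of naturals), arrivals {1..n} in order,
  edges E \<subseteq> I \<times> {1..n}, rewards r, capacities c, edge probabilities p.\<close>

definition LP_feasible ::
  "nat set \<Rightarrow> nat \<Rightarrow> (nat \<times> nat) set \<Rightarrow> (nat \<Rightarrow> nat \<Rightarrow> real) \<Rightarrow> (nat \<Rightarrow> nat)
   \<Rightarrow> (nat \<Rightarrow> nat \<Rightarrow> real) \<Rightarrow> bool" where
  "LP_feasible I n E p c x \<longleftrightarrow>
     (\<forall>i\<in>I. (\<Sum>t\<in>{t. (i,t) \<in> E}. p i t * x i t) \<le> real (c i)) \<and>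
     (\<forall>t\<in>{1..n}. (\<Sum>i\<in>{i. (i,t) \<in> E}. x i t) \<le> 1) \<and>
     (\<forall>(i,t)\<in>E. 0 \<le> x i t \<and> x i t \<le> 1)"

definition LP_obj ::
  "(nat \<times> nat) set \<Rightarrow> (nat \<Rightarrow> nat \<Rightarrow> real) \<Rightarrow> (nat \<Rightarrow> real) \<Rightarrow> (nat \<Rightarrow> nat \<Rightarrow> real) \<Rightarrow> real" where
  "LP_obj E p r x = (\<Sum>(i,t)\<in>E. p i t * r i * x i t)"

definition OPT_LP ::
  "nat set \<Rightarrow> nat \<Rightarrow> (nat \<times> nat) set \<Rightarrow> (nat \<Rightarrow> real) \<Rightarrow> (nat \<Rightarrow> nat)
   \<Rightarrow> (nat \<Rightarrow> nat \<Rightarrow> real) \<Rightarrow> real" where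
  "OPT_LP I n E r c p = Sup (LP_obj E p r ` {x. LP_feasible I n E p c x})"

definition sample_paths :: "(nat \<times> nat) set \<Rightarrow> (nat \<times> nat \<Rightarrow> bool) set" where
  "sample_paths E = {\<omega>. \<forall>e. e \<notin> E \<longrightarrow> \<not> \<omega> e}"

definition path_pmf :: "(nat \<times> nat) set \<Rightarrow> (nat \<Rightarrow> nat \<Rightarrow> real) \<Rightarrow> (nat \<times> nat \<Rightarrow> bool) pmf" where
  "path_pmf E p = Pi_pmf E False (\<lambda>(i,t). bernoulli_pmf (p i t))"

definition ind :: "bool \<Rightarrow> real" where
  "ind b = (if b then 1 else 0)"

definition PBP_feasible ::
  "nat set \<Rightarrow> nat \<Rightarrow> (nat \<times> nat) set \<Rightarrow> (nat \<Rightarrow> nat)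
   \<Rightarrow> ((nat \<times> nat \<Rightarrow> bool) \<Rightarrow> nat \<Rightarrow> nat \<Rightarrow> real) \<Rightarrow> bool" where
  "PBP_feasible I n E c x \<longleftrightarrow>
     (\<forall>\<omega>\<in>sample_paths E.
        (\<forall>i\<in>I. (\<Sum>t\<in>{t. (i,t) \<in> E}. x \<omega> i t * ind (\<omega> (i,t))) \<le> real (c i)) \<and>
        (\<forall>t\<in>{1..n}. (\<Sum>i\<in>{i. (i,t) \<in> E}. x \<omega> i t) \<le> 1) \<and>
        (\<forall>(i,t)\<in>E. 0 \<le> x \<omega> i t \<and> x \<omega> i t \<le> 1)) \<and>
     (\<forall>\<omega>\<in>sample_paths E. \<forall>\<omega>'\<in>sample_paths E. \<forall>(i,t)\<in>E.
        (\<forall>(j,s)\<in>E. s \<le> t - 1 \<longrightarrow> \<omega> (j,s) = \<omega>' (j,s)) \<longrightarrow> x \<omega> i t = x \<omega>' i t)"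

definition PBP_obj ::
  "(nat \<times> nat) set \<Rightarrow> (nat \<Rightarrow> real) \<Rightarrow> (nat \<Rightarrow> nat \<Rightarrow> real)
   \<Rightarrow> ((nat \<times> nat \<Rightarrow> bool) \<Rightarrow> nat \<Rightarrow> nat \<Rightarrow> real) \<Rightarrow> real" where
  "PBP_obj E r p x = measure_pmf.expectation (path_pmf E p)
      (\<lambda>\<omega>. \<Sum>(i,t)\<in>E. r i * x \<omega> i t * ind (\<omega> (i,t)))"

definition OPT_PBP ::
  "nat set \<Rightarrow> nat \<Rightarrow> (nat \<times> nat) set \<Rightarrow> (nat \<Rightarrow> real) \<Rightarrow> (nat \<Rightarrow> nat)
   \<Rightarrow> (nat \<Rightarrow> nat \<Rightarrow> real) \<Rightarrow> real" where
  "OPT_PBP I n E r c p = Sup (PBP_obj E r p ` {x. PBP_feasible I n E c x})"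

end

theory Submission
  imports Defs
begin

text \<open>Upper bound: averaging a feasible policy over the sample paths gives an LP-feasible point
  of the same value. The decision on edge (i, t) depends only on the outcomes of earlier arrivals,
  so it is independent of the outcome of (i, t) and E[x_it 1(i, t)] = p_it E[x_it].

  Lower bound: scale an LP solution by 1 - q with q = 1 / sqrt c_min and let every node accept
  the scaled offers greedily until its capacity is used up. Node i then earns r_i E[min(c_i, S_i)],
  where S_i is a sum of independent [0, 1]-valued terms with mean mu_i <= (1 - q) c_i. Since
  min(c, S) >= S - (S - mu)^2 / (4 (c - mu)) and Var S_i <= mu_i, the loss at node i is at most
  mu_i / (4 q c_min) = q mu_i / 4. The resulting ratio (1 - q)(1 - q / 4) >= 1 - 5 q / 4 is at
  least 1 - 2 sqrt (ln c_min / c_min) because ln 2 > (5 / 8)^2.\<close>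

section \<open>Independent edge outcomes\<close>

lemma expectation_pair_pmf_mult:
  fixes h :: "'a \<Rightarrow> real" and k :: "'b \<Rightarrow> real"
  assumes "finite (set_pmf M)" "finite (set_pmf N)"
  shows "measure_pmf.expectation (pair_pmf M N) (\<lambda>z. h (fst z) * k (snd z))
       = measure_pmf.expectation M h * measure_pmf.expectation N k"
proof -
  have "measure_pmf.expectation (pair_pmf M N) (\<lambda>z. h (fst z) * k (snd z))
      = (\<Sum>z\<in>set_pmf M \<times> set_pmf N. pmf (pair_pmf M N) z *\<^sub>R (h (fst z) * k (snd z)))"
    using assms by (intro integral_measure_pmf) auto
  also have "\<dots> = (\<Sum>(a,b)\<in>set_pmf M \<times> set_pmf N. (pmf M a * h a) * (pmf N b * k b))"
    by (intro sum.cong refl) (clarsimp simp: pmf_pair)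
  also have "\<dots> = (\<Sum>a\<in>set_pmf M. pmf M a * h a) * (\<Sum>b\<in>set_pmf N. pmf N b * k b)"
    by (simp add: sum.cartesian_product sum_product)
  also have "(\<Sum>a\<in>set_pmf M. pmf M a * h a) = measure_pmf.expectation M h"
    using assms by (subst integral_measure_pmf[of "set_pmf M"]) auto
  also have "(\<Sum>b\<in>set_pmf N. pmf N b * k b) = measure_pmf.expectation N k"
    using assms by (subst integral_measure_pmf[of "set_pmf N"]) auto
  finally show ?thesis .
qed

lemma expectation_cong_set_pmf:
  fixes f g :: "'a \<Rightarrow> real"
  shows "(\<And>x. x \<in> set_pmf M \<Longrightarrow> f x = g x)
    \<Longrightarrow> measure_pmf.expectation M f = measure_pmf.expectation M g"
  by (rule integral_cong_AE) (simp_all add: AE_measure_pmf_iff)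

lemma finite_set_Pi_pmf:
  "finite A \<Longrightarrow> finite (set_pmf (Pi_pmf A dflt (Q :: 'a \<Rightarrow> 'b::finite pmf)))"
  by (rule finite_subset[OF set_Pi_pmf_subset']) (auto intro!: finite_PiE_dflt)

lemma expectation_Pi_pmf_mult_coordinate:
  fixes g :: "('a \<Rightarrow> 'b::finite) \<Rightarrow> real" and h :: "'b \<Rightarrow> real"
  assumes "finite A" "a \<in> A"
    and g: "\<And>f y. (\<forall>x. x \<notin> A \<longrightarrow> f x = dflt) \<Longrightarrow> g (f(a := y)) = g f"
  shows "measure_pmf.expectation (Pi_pmf A dflt Q) (\<lambda>f. g f * h (f a))
       = measure_pmf.expectation (Q a) h * measure_pmf.expectation (Pi_pmf A dflt Q) g"
proof -
  define B where "B = A - {a}"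
  have B: "finite B" "a \<notin> B" "A = insert a B"
    using assms(1,2) by (auto simp: B_def)
  let ?P = "pair_pmf (Q a) (Pi_pmf B dflt Q)"
  have decomp: "Pi_pmf A dflt Q = map_pmf (\<lambda>(y, f). f(a := y)) ?P"
    unfolding B(3) by (rule Pi_pmf_insert[OF B(1,2)])
  have g_upd: "g (f(a := y)) = g f" if "f \<in> set_pmf (Pi_pmf B dflt Q)" for f y
  proof (rule g)
    have "\<forall>x. x \<notin> B \<longrightarrow> f x = dflt"
      using set_Pi_pmf_subset[OF B(1), of dflt Q] that by auto
    then show "\<forall>x. x \<notin> A \<longrightarrow> f x = dflt"
      by (simp add: B(3))
  qed
  have "measure_pmf.expectation (Pi_pmf A dflt Q) (\<lambda>f. g f * h (f a))
      = measure_pmf.expectation ?P (\<lambda>z. h (fst z) * g (snd z))"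
    unfolding decomp integral_map_pmf
    by (rule expectation_cong_set_pmf) (auto simp: g_upd)
  also have "\<dots> = measure_pmf.expectation (Q a) h * measure_pmf.expectation (Pi_pmf B dflt Q) g"
    by (rule expectation_pair_pmf_mult) (auto intro: finite_set_Pi_pmf[OF B(1)])
  also have "measure_pmf.expectation (Pi_pmf B dflt Q) g = measure_pmf.expectation ?P (\<lambda>z. g (snd z))"
    by simp
  also have "\<dots> = measure_pmf.expectation (Pi_pmf A dflt Q) g"
    unfolding decomp integral_map_pmf
    by (rule expectation_cong_set_pmf) (auto simp: g_upd)
  finally show ?thesis .
qed

abbreviation path_expectation ::
  "(nat \<times> nat) set \<Rightarrow> (nat \<Rightarrow> nat \<Rightarrow> real) \<Rightarrow> ((nat \<times> nat \<Rightarrow> bool) \<Rightarrow> real) \<Rightarrow> real" where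
  "path_expectation E p f \<equiv> measure_pmf.expectation (path_pmf E p) f"

lemma finite_set_path_pmf: "finite E \<Longrightarrow> finite (set_pmf (path_pmf E p))"
  unfolding path_pmf_def by (rule finite_set_Pi_pmf)

lemma set_path_pmf_subset: "finite E \<Longrightarrow> set_pmf (path_pmf E p) \<subseteq> sample_paths E"
  using set_Pi_pmf_subset[of E False] unfolding path_pmf_def sample_paths_def by auto

lemma integrable_path_pmf [simp]:
  fixes f :: "(nat \<times> nat \<Rightarrow> bool) \<Rightarrow> real"
  shows "finite E \<Longrightarrow> integrable (measure_pmf (path_pmf E p)) f"
  by (simp add: integrable_measure_pmf_finite finite_set_path_pmf)

lemma path_expectation_mono:
  fixes f g :: "(nat \<times> nat \<Rightarrow> bool) \<Rightarrow> real"
  assumes "finite E" "\<And>\<omega>. \<omega> \<in> sample_paths E \<Longrightarrow> f \<omega> \<le> g \<omega>"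
  shows "path_expectation E p f \<le> path_expectation E p g"
  using assms set_path_pmf_subset[OF assms(1), of p]
  by (intro integral_mono_AE) (auto simp: AE_measure_pmf_iff)

lemma path_expectation_mult_ind:
  assumes "finite E" "(i, t) \<in> E" "0 \<le> p i t" "p i t \<le> 1"
    and "\<And>\<omega> b. \<omega> \<in> sample_paths E \<Longrightarrow> g (fun_upd \<omega> (i, t) b) = g \<omega>"
  shows "path_expectation E p (\<lambda>\<omega>. g \<omega> * ind (\<omega> (i, t)))
       = p i t * path_expectation E p g"
  unfolding path_pmf_def using assms
  by (subst expectation_Pi_pmf_mult_coordinate) (auto simp: sample_paths_def ind_def)

lemma path_expectation_ind:
  assumes "finite E" "(i, t) \<in> E" "0 \<le> p i t" "p i t \<le> 1"
  shows "path_expectation E p (\<lambda>\<omega>. ind (\<omega> (i, t))) = p i t"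
  using path_expectation_mult_ind[of E i t p "\<lambda>_. 1"] assms by simp

lemma path_expectation_ind_mult_ind:
  assumes "finite E" "(i, s) \<in> E" "(i, t) \<in> E" "s \<noteq> t"
    and "0 \<le> p i s" "p i s \<le> 1" "0 \<le> p i t" "p i t \<le> 1"
  shows "path_expectation E p (\<lambda>\<omega>. ind (\<omega> (i, s)) * ind (\<omega> (i, t))) = p i s * p i t"
proof -
  have "path_expectation E p (\<lambda>\<omega>. ind (\<omega> (i, s)) * ind (\<omega> (i, t)))
      = p i t * path_expectation E p (\<lambda>\<omega>. ind (\<omega> (i, s)))"
    using assms by (intro path_expectation_mult_ind) auto
  then show ?thesis
    using path_expectation_ind[of E i s p] assms by simp
qed

section \<open>The truncated load of a node\<close>

lemma min_ge_quadratic_minorant: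
  fixes S \<mu> d :: real
  assumes "0 < d"
  shows "S - (S - \<mu>)\<^sup>2 / (4 * d) \<le> min (\<mu> + d) S"
proof -
  have "4 * d * (S - (\<mu> + d)) \<le> (S - \<mu>)\<^sup>2"
    using zero_le_power2[of "S - \<mu> - 2 * d"] by (simp add: power2_eq_square algebra_simps)
  then have "S - (\<mu> + d) \<le> (S - \<mu>)\<^sup>2 / (4 * d)"
    using assms by (simp add: field_simps)
  moreover have "0 \<le> (S - \<mu>)\<^sup>2 / (4 * d)"
    using assms by simp
  ultimately show ?thesis
    by linarith
qed

context
  fixes E :: "(nat \<times> nat) set" and p :: "nat \<Rightarrow> nat \<Rightarrow> real" and i :: nat
    and T :: "nat set" and w :: "nat \<Rightarrow> real"
  assumes finite_E: "finite E"
    and T_edges: "T \<subseteq> {t. (i, t) \<in> E}"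
    and p_prob: "\<And>t. t \<in> T \<Longrightarrow> 0 \<le> p i t \<and> p i t \<le> 1"
begin

lemma path_expectation_load:
  "path_expectation E p (\<lambda>\<omega>. \<Sum>t\<in>T. w t * ind (\<omega> (i, t))) = (\<Sum>t\<in>T. w t * p i t)"
  using T_edges p_prob by (auto simp: finite_E path_expectation_ind intro!: sum.cong)

lemma path_expectation_weighted_ind_mult_le:
  assumes w_unit: "\<And>t. t \<in> T \<Longrightarrow> 0 \<le> w t \<and> w t \<le> 1" and st: "s \<in> T" "t \<in> T"
  shows "path_expectation E p (\<lambda>\<omega>. (w s * ind (\<omega> (i, s))) * (w t * ind (\<omega> (i, t))))
    \<le> (w s * p i s) * (w t * p i t) + (if s = t then w s * p i s else 0)"
proof (cases "s = t")
  case True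
  have "(\<lambda>\<omega>. (w s * ind (\<omega> (i, s))) * (w t * ind (\<omega> (i, t))))
      = (\<lambda>\<omega>. (w s * w s) * ind (\<omega> (i, s)))"
    using True by (auto simp: ind_def)
  then have "path_expectation E p (\<lambda>\<omega>. (w s * ind (\<omega> (i, s))) * (w t * ind (\<omega> (i, t))))
      = w s * w s * p i s"
    using st T_edges p_prob[OF st(1)] path_expectation_ind[OF finite_E, of i s p] by auto
  also have "\<dots> \<le> w s * p i s"
    using w_unit[OF st(1)] p_prob[OF st(1)] by (simp add: mult_right_le_one_le mult_right_mono)
  finally show ?thesis
    using True by (auto intro!: add_increasing)
next
  case False
  have "path_expectation E p (\<lambda>\<omega>. (w s * ind (\<omega> (i, s))) * (w t * ind (\<omega> (i, t))))
      = w s * w t * path_expectation E p (\<lambda>\<omega>. ind (\<omega> (i, s)) * ind (\<omega> (i, t)))"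
    by (simp add: ac_simps)
  also have "\<dots> = (w s * p i s) * (w t * p i t)"
    using False st T_edges p_prob[OF st(1)] p_prob[OF st(2)]
    by (subst path_expectation_ind_mult_ind) (auto simp: finite_E)
  finally show ?thesis
    using False by simp
qed

text \<open>Var S <= E S: the cross terms factor by independence, and w^2 p <= w p on the diagonal.\<close>

lemma path_expectation_load_squared_le:
  defines "\<mu> \<equiv> \<Sum>t\<in>T. w t * p i t"
  assumes w_unit: "\<And>t. t \<in> T \<Longrightarrow> 0 \<le> w t \<and> w t \<le> 1"
  shows "path_expectation E p (\<lambda>\<omega>. (\<Sum>t\<in>T. w t * ind (\<omega> (i, t)))\<^sup>2) \<le> \<mu>\<^sup>2 + \<mu>"
proof -
  have finite_T: "finite T"
  proof (rule finite_subset)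
    show "T \<subseteq> snd ` E"
      using T_edges by force
  qed (simp add: finite_E)
  have "path_expectation E p (\<lambda>\<omega>. (\<Sum>t\<in>T. w t * ind (\<omega> (i, t)))\<^sup>2)
      = (\<Sum>s\<in>T. \<Sum>t\<in>T. path_expectation E p (\<lambda>\<omega>. (w s * ind (\<omega> (i, s))) * (w t * ind (\<omega> (i, t)))))"
    by (simp add: power2_eq_square sum_product finite_E)
  also have "\<dots> \<le> (\<Sum>s\<in>T. \<Sum>t\<in>T. (w s * p i s) * (w t * p i t) + (if s = t then w s * p i s else 0))"
    by (intro sum_mono path_expectation_weighted_ind_mult_le[OF w_unit])
  also have "\<dots> = \<mu>\<^sup>2 + \<mu>"
    by (simp add: sum.distrib finite_T \<mu>_def power2_eq_square sum_product)
  finally show ?thesis .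
qed

lemma path_expectation_min_load_ge:
  defines "\<mu> \<equiv> \<Sum>t\<in>T. w t * p i t"
  assumes w_unit: "\<And>t. t \<in> T \<Longrightarrow> 0 \<le> w t \<and> w t \<le> 1" and "\<mu> < c"
  shows "\<mu> - \<mu> / (4 * (c - \<mu>)) \<le> path_expectation E p (\<lambda>\<omega>. min c (\<Sum>t\<in>T. w t * ind (\<omega> (i, t))))"
proof -
  define S where "S \<omega> = (\<Sum>t\<in>T. w t * ind (\<omega> (i, t)))" for \<omega>
  have mean: "path_expectation E p S = \<mu>"
    unfolding S_def \<mu>_def by (rule path_expectation_load)
  have variance: "path_expectation E p (\<lambda>\<omega>. (S \<omega> - \<mu>)\<^sup>2) \<le> \<mu>"
  proof -
    have "path_expectation E p (\<lambda>\<omega>. (S \<omega> - \<mu>)\<^sup>2)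
        = path_expectation E p (\<lambda>\<omega>. (S \<omega>)\<^sup>2) - 2 * \<mu> * path_expectation E p S + \<mu>\<^sup>2"
      by (simp add: power2_diff finite_E)
    then show ?thesis
      using path_expectation_load_squared_le[OF w_unit] mean unfolding S_def \<mu>_def
      by (simp add: power2_eq_square)
  qed
  have "\<mu> - \<mu> / (4 * (c - \<mu>)) \<le> \<mu> - path_expectation E p (\<lambda>\<omega>. (S \<omega> - \<mu>)\<^sup>2) / (4 * (c - \<mu>))"
    using variance assms(3) by (simp add: divide_right_mono)
  also have "\<dots> = path_expectation E p (\<lambda>\<omega>. S \<omega> - (S \<omega> - \<mu>)\<^sup>2 / (4 * (c - \<mu>)))"
    using mean by (simp add: finite_E)
  also have "\<dots> \<le> path_expectation E p (\<lambda>\<omega>. min c (S \<omega>))"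
    using min_ge_quadratic_minorant[where d = "c - \<mu>" and \<mu> = \<mu>] assms(3)
    by (intro path_expectation_mono finite_E) simp
  finally show ?thesis
    unfolding S_def .
qed

end

section \<open>Feasibility and the greedy policy\<close>

lemma LP_feasibleD:
  assumes "LP_feasible I n E p c y"
  shows LP_capacityD: "i \<in> I \<Longrightarrow> (\<Sum>t\<in>{t. (i, t) \<in> E}. p i t * y i t) \<le> real (c i)"
    and LP_arrivalD: "t \<in> {1..n} \<Longrightarrow> (\<Sum>i\<in>{i. (i, t) \<in> E}. y i t) \<le> 1"
    and LP_unitD: "(i, t) \<in> E \<Longrightarrow> 0 \<le> y i t \<and> y i t \<le> 1"
  using assms unfolding LP_feasible_def by auto

lemma PBP_feasibleD:
  assumes "PBP_feasible I n E c x" "\<omega> \<in> sample_paths E"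
  shows PBP_capacityD: "i \<in> I \<Longrightarrow> (\<Sum>t\<in>{t. (i, t) \<in> E}. x \<omega> i t * ind (\<omega> (i, t))) \<le> real (c i)"
    and PBP_arrivalD: "t \<in> {1..n} \<Longrightarrow> (\<Sum>i\<in>{i. (i, t) \<in> E}. x \<omega> i t) \<le> 1"
    and PBP_unitD: "(i, t) \<in> E \<Longrightarrow> 0 \<le> x \<omega> i t \<and> x \<omega> i t \<le> 1"
  using assms unfolding PBP_feasible_def by auto

lemma PBP_nonanticipativeD:
  assumes "PBP_feasible I n E c x" "\<omega> \<in> sample_paths E" "\<omega>' \<in> sample_paths E" "(i, t) \<in> E"
    and "\<And>j s. (j, s) \<in> E \<Longrightarrow> s \<le> t - 1 \<Longrightarrow> \<omega> (j, s) = \<omega>' (j, s)"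
  shows "x \<omega> i t = x \<omega>' i t"
  using assms unfolding PBP_feasible_def by fast

definition offered_load :: "(nat \<Rightarrow> nat \<Rightarrow> real) \<Rightarrow> (nat \<times> nat \<Rightarrow> bool) \<Rightarrow> nat \<Rightarrow> nat \<Rightarrow> real" where
  "offered_load Y \<omega> i k = (\<Sum>s\<in>{1..k}. Y i s * ind (\<omega> (i, s)))"

text \<open>Offer Y i t to node i, truncated to the capacity left after the successful offers so far;
  the consumption of i then telescopes to the truncated offered load.\<close>

definition greedy_policy ::
  "(nat \<Rightarrow> nat \<Rightarrow> real) \<Rightarrow> (nat \<Rightarrow> nat) \<Rightarrow> (nat \<times> nat \<Rightarrow> bool) \<Rightarrow> nat \<Rightarrow> nat \<Rightarrow> real" where
  "greedy_policy Y c \<omega> i t = max 0 (min (Y i t) (real (c i) - offered_load Y \<omega> i (t - 1)))"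

lemma greedy_policy_bounds:
  "0 \<le> Y i t \<Longrightarrow> 0 \<le> greedy_policy Y c \<omega> i t \<and> greedy_policy Y c \<omega> i t \<le> Y i t"
  by (simp add: greedy_policy_def)

lemma greedy_policy_consumption:
  assumes "\<And>s. 0 \<le> Y i s"
  shows "(\<Sum>t\<in>{1..k}. greedy_policy Y c \<omega> i t * ind (\<omega> (i, t)))
       = min (real (c i)) (offered_load Y \<omega> i k)"
proof (induction k)
  case 0
  show ?case by (simp add: offered_load_def)
next
  case (Suc k)
  have "offered_load Y \<omega> i (Suc k) = offered_load Y \<omega> i k + Y i (Suc k) * ind (\<omega> (i, Suc k))"
    by (simp add: offered_load_def)
  then show ?case
    using Suc.IH assms[of "Suc k"] by (auto simp: greedy_policy_def ind_def min_def max_def)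
qed

lemma greedy_policy_nonanticipative:
  assumes "\<And>s. s \<in> {1..t - 1} \<Longrightarrow> Y i s \<noteq> 0 \<Longrightarrow> \<omega> (i, s) = \<omega>' (i, s)"
  shows "greedy_policy Y c \<omega> i t = greedy_policy Y c \<omega>' i t"
proof -
  have "offered_load Y \<omega> i (t - 1) = offered_load Y \<omega>' i (t - 1)"
    unfolding offered_load_def
  proof (intro sum.cong refl)
    fix s assume "s \<in> {1..t - 1}"
    then show "Y i s * ind (\<omega> (i, s)) = Y i s * ind (\<omega>' (i, s))"
      using assms by (cases "Y i s = 0") auto
  qed
  then show ?thesis
    by (simp add: greedy_policy_def)
qed

definition scaled_offers :: "(nat \<times> nat) set \<Rightarrow> real \<Rightarrow> (nat \<Rightarrow> nat \<Rightarrow> real) \<Rightarrow> nat \<Rightarrow> nat \<Rightarrow> real" where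
  "scaled_offers E q y i t = (if (i, t) \<in> E then (1 - q) * y i t else 0)"

section \<open>Comparing the two optima\<close>

lemma cSup_mult_le_cSup:
  fixes A B :: "real set" and k :: real
  assumes "A \<noteq> {}" "bdd_above B" "0 < k" "\<And>a. a \<in> A \<Longrightarrow> \<exists>b\<in>B. k * a \<le> b"
  shows "Sup A * k \<le> Sup B"
proof -
  have "Sup A \<le> Sup B / k"
  proof (rule cSup_least[OF assms(1)])
    fix a assume "a \<in> A"
    then obtain b where "b \<in> B" "k * a \<le> b"
      using assms(4) by blast
    then have "k * a \<le> Sup B"
      using cSup_upper[OF _ assms(2)] by (meson order_trans)
    then show "a \<le> Sup B / k"
      using assms(3) by (simp add: pos_le_divide_eq mult.commute)
  qed
  then show ?thesis
    using assms(3) by (simp add: pos_le_divide_eq)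
qed

lemma sqrt_log_ratio_bound:
  fixes m :: real
  assumes "2 \<le> m"
  shows "1 - 2 * sqrt (ln m / m) \<le> (1 - 1 / sqrt m) * (1 - 1 / (4 * (1 / sqrt m) * m))"
proof -
  have sqrt_m: "0 < sqrt m" "sqrt m * sqrt m = m"
    using assms by auto
  have "ln 2 \<le> ln m"
    using assms by simp
  then have "(5 / 8)\<^sup>2 \<le> ln m"
    using ln2_ge_two_thirds by (simp add: power2_eq_square)
  then have "5 / 8 \<le> sqrt (ln m)"
    by (rule real_le_rsqrt)
  then have "5 / (4 * sqrt m) \<le> 2 * sqrt (ln m / m)"
    using sqrt_m by (simp add: real_sqrt_divide field_simps)
  moreover have "(1 - 1 / sqrt m) * (1 - 1 / (4 * (1 / sqrt m) * m))
      = 1 - 5 / (4 * sqrt m) + 1 / (4 * m)"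
    using sqrt_m by (simp add: field_simps)
  moreover have "0 \<le> 1 / (4 * m)"
    using assms by simp
  ultimately show ?thesis
    by linarith
qed

locale bipartite_instance =
  fixes I :: "nat set" and n :: nat and E :: "(nat \<times> nat) set" and p :: "nat \<Rightarrow> nat \<Rightarrow> real"
  assumes finite_I: "finite I"
    and edges_subset: "E \<subseteq> I \<times> {1..n}"
    and edge_prob: "\<And>i t. (i, t) \<in> E \<Longrightarrow> 0 \<le> p i t \<and> p i t \<le> 1"
begin

lemma finite_E: "finite E"
  using finite_subset[OF edges_subset] finite_I by blast

lemma node_edges_subset: "{t. (i, t) \<in> E} \<subseteq> {1..n}"
  using edges_subset by blast

lemma path_expectation_PBP_mult_ind:
  assumes x: "PBP_feasible I n E c x" and it: "(i, t) \<in> E"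
  shows "path_expectation E p (\<lambda>\<omega>. x \<omega> i t * ind (\<omega> (i, t)))
       = p i t * path_expectation E p (\<lambda>\<omega>. x \<omega> i t)"
proof (rule path_expectation_mult_ind[OF finite_E it])
  show "0 \<le> p i t" "p i t \<le> 1"
    using edge_prob[OF it] by auto
  fix \<omega> b assume \<omega>: "\<omega> \<in> sample_paths E"
  have "fun_upd \<omega> (i, t) b \<in> sample_paths E"
    using \<omega> it by (auto simp: sample_paths_def)
  moreover have "1 \<le> t"
    using edges_subset it by auto
  ultimately show "x (fun_upd \<omega> (i, t) b) i t = x \<omega> i t"
    by (intro PBP_nonanticipativeD[OF x _ \<omega> it]) auto
qed

lemma PBP_average_LP_feasible:
  assumes x: "PBP_feasible I n E c x"
  shows "LP_feasible I n E p c (\<lambda>i t. path_expectation E p (\<lambda>\<omega>. x \<omega> i t))"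
proof -
  let ?y = "\<lambda>i t. path_expectation E p (\<lambda>\<omega>. x \<omega> i t)"
  have capacity: "(\<Sum>t\<in>{t. (i, t) \<in> E}. p i t * ?y i t) \<le> real (c i)" if i: "i \<in> I" for i
  proof -
    have "(\<Sum>t\<in>{t. (i, t) \<in> E}. p i t * ?y i t)
        = path_expectation E p (\<lambda>\<omega>. \<Sum>t\<in>{t. (i, t) \<in> E}. x \<omega> i t * ind (\<omega> (i, t)))"
      by (simp add: finite_E path_expectation_PBP_mult_ind[OF x])
    also have "\<dots> \<le> path_expectation E p (\<lambda>_. real (c i))"
      by (intro path_expectation_mono finite_E PBP_capacityD[OF x _ i])
    finally show ?thesis
      by simp
  qed
  have arrival: "(\<Sum>i\<in>{i. (i, t) \<in> E}. ?y i t) \<le> 1" if t: "t \<in> {1..n}" for t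
  proof -
    have "(\<Sum>i\<in>{i. (i, t) \<in> E}. ?y i t) = path_expectation E p (\<lambda>\<omega>. \<Sum>i\<in>{i. (i, t) \<in> E}. x \<omega> i t)"
      by (simp add: finite_E)
    also have "\<dots> \<le> path_expectation E p (\<lambda>_. 1)"
      by (intro path_expectation_mono finite_E PBP_arrivalD[OF x _ t])
    finally show ?thesis
      by simp
  qed
  have unit: "0 \<le> ?y i t \<and> ?y i t \<le> 1" if it: "(i, t) \<in> E" for i t
    using path_expectation_mono[OF finite_E, of "\<lambda>_. 0" "\<lambda>\<omega>. x \<omega> i t" p]
      path_expectation_mono[OF finite_E, of "\<lambda>\<omega>. x \<omega> i t" "\<lambda>_. 1" p]
      PBP_unitD[OF x _ it] by simp
  show ?thesis
    unfolding LP_feasible_def using capacity arrival unit by blast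
qed

lemma LP_obj_PBP_average:
  assumes x: "PBP_feasible I n E c x"
  shows "LP_obj E p r (\<lambda>i t. path_expectation E p (\<lambda>\<omega>. x \<omega> i t)) = PBP_obj E r p x"
proof -
  have "PBP_obj E r p x = (\<Sum>(i, t)\<in>E. r i * path_expectation E p (\<lambda>\<omega>. x \<omega> i t * ind (\<omega> (i, t))))"
    unfolding PBP_obj_def by (simp add: finite_E case_prod_beta mult.assoc)
  also have "\<dots> = LP_obj E p r (\<lambda>i t. path_expectation E p (\<lambda>\<omega>. x \<omega> i t))"
    unfolding LP_obj_def by (intro sum.cong refl) (auto simp: path_expectation_PBP_mult_ind[OF x])
  finally show ?thesis ..
qed

lemma greedy_policy_PBP_feasible:
  assumes y: "LP_feasible I n E p c y"
    and Y: "\<And>i t. (i, t) \<in> E \<Longrightarrow> 0 \<le> Y i t \<and> Y i t \<le> y i t"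
    and Y_off: "\<And>i t. (i, t) \<notin> E \<Longrightarrow> Y i t = 0"
  shows "PBP_feasible I n E c (greedy_policy Y c)"
proof -
  let ?x = "greedy_policy Y c"
  have Y_nonneg: "0 \<le> Y i t" for i t
    using Y Y_off by (cases "(i, t) \<in> E") auto
  have x_le: "0 \<le> ?x \<omega> i t \<and> ?x \<omega> i t \<le> Y i t" for \<omega> i t
    by (rule greedy_policy_bounds[OF Y_nonneg])
  have x_off: "?x \<omega> i t = 0" if "(i, t) \<notin> E" for \<omega> i t
    using x_le[of \<omega> i t] Y_off[OF that] by simp
  have capacity: "(\<Sum>t\<in>{t. (i, t) \<in> E}. ?x \<omega> i t * ind (\<omega> (i, t))) \<le> real (c i)" for \<omega> i
  proof -
    have "(\<Sum>t\<in>{t. (i, t) \<in> E}. ?x \<omega> i t * ind (\<omega> (i, t)))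
        = (\<Sum>t\<in>{1..n}. ?x \<omega> i t * ind (\<omega> (i, t)))"
      using node_edges_subset x_off by (intro sum.mono_neutral_left) auto
    also have "\<dots> = min (real (c i)) (offered_load Y \<omega> i n)"
      by (rule greedy_policy_consumption[OF Y_nonneg])
    finally show ?thesis
      by simp
  qed
  have arrival: "(\<Sum>i\<in>{i. (i, t) \<in> E}. ?x \<omega> i t) \<le> 1" if "t \<in> {1..n}" for \<omega> t
  proof -
    have "(\<Sum>i\<in>{i. (i, t) \<in> E}. ?x \<omega> i t) \<le> (\<Sum>i\<in>{i. (i, t) \<in> E}. y i t)"
      using x_le Y by (intro sum_mono) (blast intro: order_trans)
    also have "\<dots> \<le> 1"
      by (rule LP_arrivalD[OF y that])
    finally show ?thesis .
  qed
  have unit: "0 \<le> ?x \<omega> i t \<and> ?x \<omega> i t \<le> 1" if "(i, t) \<in> E" for \<omega> i t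
    using x_le[of \<omega> i t] Y[OF that] LP_unitD[OF y that] by linarith
  have nonanticipative: "\<forall>(i, t)\<in>E. (\<forall>(j, s)\<in>E. s \<le> t - 1 \<longrightarrow> \<omega> (j, s) = \<omega>' (j, s))
      \<longrightarrow> ?x \<omega> i t = ?x \<omega>' i t" for \<omega> \<omega>'
  proof (clarify intro!: greedy_policy_nonanticipative)
    fix i t s assume "\<forall>(j, s)\<in>E. s \<le> t - 1 \<longrightarrow> \<omega> (j, s) = \<omega>' (j, s)"
      and "s \<in> {1..t - 1}" "Y i s \<noteq> 0"
    then show "\<omega> (i, s) = \<omega>' (i, s)"
      using Y_off by fastforce
  qed
  show ?thesis
    unfolding PBP_feasible_def using capacity arrival unit nonanticipative by auto
qed

lemma offered_load_node_edges:
  assumes "\<And>t. (i, t) \<notin> E \<Longrightarrow> Y i t = 0"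
  shows "offered_load Y \<omega> i n = (\<Sum>t\<in>{t. (i, t) \<in> E}. Y i t * ind (\<omega> (i, t)))"
  unfolding offered_load_def
  using node_edges_subset assms by (intro sum.mono_neutral_right) auto

lemma LP_obj_by_node:
  "LP_obj E p r y = (\<Sum>i\<in>I. r i * (\<Sum>t\<in>{t. (i, t) \<in> E}. p i t * y i t))"
proof -
  have "E = Sigma I (\<lambda>i. {t. (i, t) \<in> E})"
    using edges_subset by auto
  then have "LP_obj E p r y = (\<Sum>i\<in>I. \<Sum>t\<in>{t. (i, t) \<in> E}. p i t * r i * y i t)"
    unfolding LP_obj_def using finite_I finite_subset[OF node_edges_subset]
    by (simp add: sum.Sigma)
  then show ?thesis
    by (simp add: sum_distrib_left ac_simps)
qed

lemma PBP_obj_greedy_policy: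
  assumes Y_nonneg: "\<And>i t. 0 \<le> Y i t" and Y_off: "\<And>i t. (i, t) \<notin> E \<Longrightarrow> Y i t = 0"
  shows "PBP_obj E r p (greedy_policy Y c)
       = (\<Sum>i\<in>I. r i * path_expectation E p (\<lambda>\<omega>. min (real (c i)) (offered_load Y \<omega> i n)))"
proof -
  have x_off: "greedy_policy Y c \<omega> i t = 0" if "(i, t) \<notin> E" for \<omega> i t
    using greedy_policy_bounds[of Y i t c \<omega>] Y_nonneg[of i t] Y_off[OF that] by simp
  have "(\<Sum>(i, t)\<in>E. r i * greedy_policy Y c \<omega> i t * ind (\<omega> (i, t)))
      = (\<Sum>i\<in>I. r i * min (real (c i)) (offered_load Y \<omega> i n))" for \<omega>
  proof -
    have "(\<Sum>(i, t)\<in>E. r i * greedy_policy Y c \<omega> i t * ind (\<omega> (i, t)))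
        = (\<Sum>(i, t)\<in>I \<times> {1..n}. r i * greedy_policy Y c \<omega> i t * ind (\<omega> (i, t)))"
      using finite_I edges_subset x_off by (intro sum.mono_neutral_left) auto
    also have "\<dots> = (\<Sum>i\<in>I. r i * (\<Sum>t\<in>{1..n}. greedy_policy Y c \<omega> i t * ind (\<omega> (i, t))))"
      by (simp add: sum.cartesian_product[symmetric] sum_distrib_left mult.assoc)
    also have "\<dots> = (\<Sum>i\<in>I. r i * min (real (c i)) (offered_load Y \<omega> i n))"
      using greedy_policy_consumption[of Y, OF Y_nonneg] by simp
    finally show ?thesis .
  qed
  then show ?thesis
    unfolding PBP_obj_def by (simp add: finite_E)
qed

lemma LP_obj_nonneg:
  assumes "\<And>i. i \<in> I \<Longrightarrow> 0 \<le> r i" "LP_feasible I n E p c y"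
  shows "0 \<le> LP_obj E p r y"
  unfolding LP_obj_def using assms edges_subset edge_prob LP_unitD[OF assms(2)]
  by (intro sum_nonneg) auto

lemma scaled_offers_bounds:
  assumes "LP_feasible I n E p c y" "0 < q" "q < 1"
  shows scaled_offers_le: "(i, t) \<in> E \<Longrightarrow> 0 \<le> scaled_offers E q y i t \<and> scaled_offers E q y i t \<le> y i t"
    and scaled_offers_nonneg: "0 \<le> scaled_offers E q y i t"
    and scaled_offers_off: "(i, t) \<notin> E \<Longrightarrow> scaled_offers E q y i t = 0"
  using LP_unitD[OF assms(1), of i t] assms(2,3)
  by (auto simp: scaled_offers_def mult_left_le_one_le)

lemma greedy_node_value_ge:
  assumes y: "LP_feasible I n E p c y" and q: "0 < q" "q < 1"
    and m: "0 < m" "m \<le> real (c i)" and i: "i \<in> I"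
  shows "(1 - q) * (1 - 1 / (4 * q * m)) * (\<Sum>t\<in>{t. (i, t) \<in> E}. p i t * y i t)
    \<le> path_expectation E p (\<lambda>\<omega>. min (real (c i)) (offered_load (scaled_offers E q y) \<omega> i n))"
proof -
  define L where "L = (\<Sum>t\<in>{t. (i, t) \<in> E}. p i t * y i t)"
  define \<mu> where "\<mu> = (\<Sum>t\<in>{t. (i, t) \<in> E}. (1 - q) * y i t * p i t)"
  have y_unit: "0 \<le> y i t \<and> y i t \<le> 1" if "(i, t) \<in> E" for t
    by (rule LP_unitD[OF y that])
  have \<mu>_eq: "\<mu> = (1 - q) * L"
    by (simp add: \<mu>_def L_def sum_distrib_left ac_simps)
  have L_nonneg: "0 \<le> L"
    unfolding L_def using edge_prob y_unit by (intro sum_nonneg) auto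
  have "\<mu> \<le> (1 - q) * real (c i)"
    unfolding \<mu>_eq using LP_capacityD[OF y i] q by (simp add: L_def)
  moreover have "q * m \<le> q * real (c i)"
    using m q by simp
  ultimately have gap: "q * m \<le> real (c i) - \<mu>"
    by (simp add: algebra_simps)
  have qm: "0 < q * m"
    using q m by simp
  have "(1 - q) * (1 - 1 / (4 * q * m)) * L = \<mu> - \<mu> / (4 * (q * m))"
    using qm by (simp add: \<mu>_eq field_simps)
  also have "\<dots> \<le> \<mu> - \<mu> / (4 * (real (c i) - \<mu>))"
    using gap qm \<mu>_eq L_nonneg q by (intro diff_left_mono divide_left_mono) auto
  also have "\<dots> \<le> path_expectation E p
      (\<lambda>\<omega>. min (real (c i)) (\<Sum>t\<in>{t. (i, t) \<in> E}. (1 - q) * y i t * ind (\<omega> (i, t))))"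
    unfolding \<mu>_def
    using edge_prob y_unit q gap qm
    by (intro path_expectation_min_load_ge finite_E) (auto simp: \<mu>_def mult_le_one)
  also have "\<dots> = path_expectation E p (\<lambda>\<omega>. min (real (c i)) (offered_load (scaled_offers E q y) \<omega> i n))"
    by (simp add: offered_load_node_edges scaled_offers_def)
  finally show ?thesis
    unfolding L_def .
qed

lemma greedy_rounding:
  assumes y: "LP_feasible I n E p c y" and q: "0 < q" "q < 1"
    and m: "0 < m" "\<And>i. i \<in> I \<Longrightarrow> m \<le> real (c i)" and r: "\<And>i. i \<in> I \<Longrightarrow> 0 \<le> r i"
  shows "\<exists>x. PBP_feasible I n E c x
    \<and> (1 - q) * (1 - 1 / (4 * q * m)) * LP_obj E p r y \<le> PBP_obj E r p x"
proof -
  let ?Y = "scaled_offers E q y"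
  have "(1 - q) * (1 - 1 / (4 * q * m)) * LP_obj E p r y
      = (\<Sum>i\<in>I. r i * ((1 - q) * (1 - 1 / (4 * q * m)) * (\<Sum>t\<in>{t. (i, t) \<in> E}. p i t * y i t)))"
    by (simp add: LP_obj_by_node sum_distrib_left ac_simps)
  also have "\<dots> \<le> (\<Sum>i\<in>I. r i * path_expectation E p (\<lambda>\<omega>. min (real (c i)) (offered_load ?Y \<omega> i n)))"
    using r greedy_node_value_ge[OF y q m(1) m(2)] by (intro sum_mono mult_left_mono) auto
  also have "\<dots> = PBP_obj E r p (greedy_policy ?Y c)"
    using scaled_offers_nonneg[OF y q] scaled_offers_off[OF y q]
    by (intro PBP_obj_greedy_policy[symmetric]) auto
  finally show ?thesis
    using greedy_policy_PBP_feasible[OF y] scaled_offers_le[OF y q] scaled_offers_off[OF y q] by blast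
qed

lemma greedy_rounding_log_ratio:
  assumes y: "LP_feasible I n E p c y" and m: "2 \<le> m" "\<And>i. i \<in> I \<Longrightarrow> m \<le> real (c i)"
    and r: "\<And>i. i \<in> I \<Longrightarrow> 0 \<le> r i"
  shows "\<exists>x. PBP_feasible I n E c x \<and> (1 - 2 * sqrt (ln m / m)) * LP_obj E p r y \<le> PBP_obj E r p x"
proof -
  have q: "0 < 1 / sqrt m" "1 / sqrt m < 1" and m_pos: "0 < m"
    using m(1) by (auto simp: real_less_rsqrt)
  have "\<exists>x. PBP_feasible I n E c x
      \<and> (1 - 1 / sqrt m) * (1 - 1 / (4 * (1 / sqrt m) * m)) * LP_obj E p r y \<le> PBP_obj E r p x"
    by (rule greedy_rounding[OF y q m_pos]) (simp_all add: m(2) r)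
  then obtain x where x: "PBP_feasible I n E c x"
    "(1 - 1 / sqrt m) * (1 - 1 / (4 * (1 / sqrt m) * m)) * LP_obj E p r y \<le> PBP_obj E r p x"
    by blast
  have "(1 - 2 * sqrt (ln m / m)) * LP_obj E p r y
      \<le> (1 - 1 / sqrt m) * (1 - 1 / (4 * (1 / sqrt m) * m)) * LP_obj E p r y"
    using sqrt_log_ratio_bound[OF m(1)] LP_obj_nonneg[OF r y] by (rule mult_right_mono)
  then show ?thesis
    using x by (meson order_trans)
qed

lemma LP_feasible_zero: "LP_feasible I n E p c (\<lambda>_ _. 0)"
  by (simp add: LP_feasible_def)

lemma PBP_feasible_zero: "PBP_feasible I n E c (\<lambda>_ _ _. 0)"
  by (simp add: PBP_feasible_def)

lemma bdd_above_LP_obj: "bdd_above (LP_obj E p r ` {y. LP_feasible I n E p c y})"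
proof (rule bdd_aboveI2)
  fix y assume y: "y \<in> {y. LP_feasible I n E p c y}"
  show "LP_obj E p r y \<le> (\<Sum>(i, t)\<in>E. \<bar>p i t * r i\<bar>)"
    unfolding LP_obj_def
  proof (rule sum_mono, clarify)
    fix i t assume "(i, t) \<in> E"
    then have "0 \<le> y i t" "y i t \<le> 1"
      using y LP_unitD by blast+
    then have "p i t * r i * y i t \<le> \<bar>p i t * r i\<bar> * y i t"
      by (intro mult_right_mono) auto
    also have "\<dots> \<le> \<bar>p i t * r i\<bar>"
      using \<open>y i t \<le> 1\<close> by (intro mult_left_le) auto
    finally show "p i t * r i * y i t \<le> \<bar>p i t * r i\<bar>" .
  qed
qed

lemma PBP_obj_le_OPT_LP:
  assumes "PBP_feasible I n E c x"
  shows "PBP_obj E r p x \<le> OPT_LP I n E r c p"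
  unfolding OPT_LP_def LP_obj_PBP_average[OF assms, symmetric]
  using PBP_average_LP_feasible[OF assms] by (intro cSup_upper bdd_above_LP_obj) blast

lemma OPT_PBP_le_OPT_LP: "OPT_PBP I n E r c p \<le> OPT_LP I n E r c p"
  unfolding OPT_PBP_def using PBP_feasible_zero PBP_obj_le_OPT_LP
  by (intro cSup_least) auto

lemma OPT_LP_scaled_le_OPT_PBP:
  assumes r: "\<And>i. i \<in> I \<Longrightarrow> 0 \<le> r i"
    and rounding: "\<And>y. LP_feasible I n E p c y
      \<Longrightarrow> \<exists>x. PBP_feasible I n E c x \<and> k * LP_obj E p r y \<le> PBP_obj E r p x"
  shows "OPT_LP I n E r c p * k \<le> OPT_PBP I n E r c p"
proof -
  have bdd_PBP: "bdd_above (PBP_obj E r p ` {x. PBP_feasible I n E c x})"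
    using PBP_obj_le_OPT_LP by (intro bdd_aboveI2) blast
  show ?thesis
  proof (cases "0 < k")
    case True
    then show ?thesis
      unfolding OPT_LP_def OPT_PBP_def using LP_feasible_zero rounding
      by (intro cSup_mult_le_cSup bdd_PBP) blast+
  next
    case False
    have "LP_obj E p r (\<lambda>_ _. 0) \<le> OPT_LP I n E r c p"
      unfolding OPT_LP_def using LP_feasible_zero by (intro cSup_upper bdd_above_LP_obj) blast
    moreover have "PBP_obj E r p (\<lambda>_ _ _. 0) \<le> OPT_PBP I n E r c p"
      unfolding OPT_PBP_def using PBP_feasible_zero by (intro cSup_upper bdd_PBP) blast
    ultimately show ?thesis
      using False mult_nonneg_nonpos[of "OPT_LP I n E r c p" k] by (simp add: LP_obj_def PBP_obj_def)
  qed
qed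

end

theorem theorem3:
  shows "\<exists>C>0. \<forall>(I::nat set) (n::nat) (E::(nat \<times> nat) set) (r::nat \<Rightarrow> real) (c::nat \<Rightarrow> nat)
            (p::nat \<Rightarrow> nat \<Rightarrow> real).
     finite I \<and> I \<noteq> {} \<and> E \<subseteq> I \<times> {1..n} \<and>
     (\<forall>i\<in>I. r i > 0) \<and> (\<forall>i\<in>I. c i \<ge> 1) \<and>
     (\<forall>(i,t)\<in>E. 0 \<le> p i t \<and> p i t \<le> 1) \<and>
     Min (c ` I) \<ge> 2 \<longrightarrow>
       OPT_LP I n E r c p * (1 - C * sqrt (ln (real (Min (c ` I))) / real (Min (c ` I))))
         \<le> OPT_PBP I n E r c p
       \<and> OPT_PBP I n E r c p \<le> OPT_LP I n E r c p"
proof (intro exI[of _ 2] conjI allI impI)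
  fix I :: "nat set" and n :: nat and E :: "(nat \<times> nat) set" and r :: "nat \<Rightarrow> real"
    and c :: "nat \<Rightarrow> nat" and p :: "nat \<Rightarrow> nat \<Rightarrow> real"
  assume H: "finite I \<and> I \<noteq> {} \<and> E \<subseteq> I \<times> {1..n} \<and> (\<forall>i\<in>I. r i > 0) \<and> (\<forall>i\<in>I. c i \<ge> 1) \<and>
     (\<forall>(i,t)\<in>E. 0 \<le> p i t \<and> p i t \<le> 1) \<and> Min (c ` I) \<ge> 2"
  interpret bipartite_instance I n E p
    by unfold_locales (use H in auto)
  define m where "m = real (Min (c ` I))"
  have m: "2 \<le> m" "\<And>i. i \<in> I \<Longrightarrow> m \<le> real (c i)"
    using H finite_I by (auto simp: m_def)
  have r: "\<And>i. i \<in> I \<Longrightarrow> 0 \<le> r i"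
    using H by (simp add: less_imp_le)
  show "OPT_LP I n E r c p * (1 - 2 * sqrt (ln (real (Min (c ` I))) / real (Min (c ` I))))
      \<le> OPT_PBP I n E r c p"
    unfolding m_def[symmetric]
  proof (rule OPT_LP_scaled_le_OPT_PBP)
    show "\<exists>x. PBP_feasible I n E c x \<and> (1 - 2 * sqrt (ln m / m)) * LP_obj E p r y \<le> PBP_obj E r p x"
      if "LP_feasible I n E p c y" for y
      using that m r by (rule greedy_rounding_log_ratio)
  qed (fact r)
  show "OPT_PBP I n E r c p \<le> OPT_LP I n E r c p"
    by (rule OPT_PBP_le_OPT_LP)
qed simp

end
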